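(* For $1\le j\le n$ let $X_j\sim\mathrm{ME}(\alpha_j,T_j,t_j)$ be independent random variables, and for $1\le k\le n$ let $X_{k:n}$ be the $k$-th order statistic of $\{X_1,\dots,X_n\}$ (so $X_{1:n}\le\cdots\le X_{n:n}$). Then the density $f_{k:n}$ of $X_{k:n}$ belongs to $\mathrm{MEam}$, i.e. it is of the form $\sum_{j=1}^L c_j g_j$ with $L\in\mathbb{N}_+$, each $g_j$ an ME density, $c_j\in\mathbb{R}$ and $\sum_j c_j=1$.
   Context: A matrix-exponential (ME) density is a probability density on $[0,\infty)$ of the form $f(x)=\alpha e^{Tx}t$, $x\ge0$, with $\alpha$ a real row vector, $T$ a real square matrix and $t$ a real column vector of compatible dimensions; we write $X\sim\mathrm{ME}(\alpha,T,t)$ if $X$ has this density. $\mathrm{MEam}$ is the class of nonnegative functions $\sum_{j=1}^L c_j g_j$ with $L\in\mathbb{N}_+$, $g_j$ ME densities, $c_j\in\mathbb{R}$ (possibly negative), $\sum_j c_j=1$. *)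

theory Defs
  imports "HOL-Probability.Probability" "Jordan_Normal_Form.Matrix"
begin

definition mat_exp :: "real mat \<Rightarrow> real mat" where
  "mat_exp A = mat (dim_row A) (dim_col A)
     (\<lambda>ij. \<Sum>k. index_mat ((1 / fact k) \<cdot>\<^sub>m (A ^\<^sub>m k)) ij)"

definition ME_density :: "(real \<Rightarrow> real) \<Rightarrow> bool" where
  "ME_density f \<longleftrightarrow>
     (\<exists>m \<alpha> T t. \<alpha> \<in> carrier_vec m \<and> T \<in> carrier_mat m m \<and> t \<in> carrier_vec m \<and>
        (\<forall>x\<ge>0. f x = scalar_prod \<alpha> (mat_exp (x \<cdot>\<^sub>m T) *\<^sub>v t)) \<and>
        (\<forall>x<0. f x = 0) \<and>
        (\<forall>x. 0 \<le> f x) \<and>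
        (f has_integral 1) {0..})"

definition MEam :: "(real \<Rightarrow> real) \<Rightarrow> bool" where
  "MEam f \<longleftrightarrow> (\<forall>x. 0 \<le> f x) \<and>
     (\<exists>(L::nat) (c::nat \<Rightarrow> real) (g::nat \<Rightarrow> real \<Rightarrow> real). L \<ge> 1 \<and> (\<forall>j\<in>{1..L}. ME_density (g j)) \<and>
        (\<Sum>j=1..L. c j) = (1::real) \<and>
        (\<forall>x. f x = (\<Sum>j=1..L. c j * g j x)))"

definition order_stat :: "(nat \<Rightarrow> 'a \<Rightarrow> real) \<Rightarrow> nat \<Rightarrow> nat \<Rightarrow> 'a \<Rightarrow> real" where
  "order_stat X n k \<omega> = sort (map (\<lambda>j. X j \<omega>) [1..<n+1]) ! (k - 1)"

end

(*
  Call h : [0,oo) -> R ODE-representable if h = sum_i a_i u_i for a solution u of a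
  constant-coefficient linear system u' = A u.  These are exactly the ME functions
  alpha e^{xT} t: the entries of e^{xT} solve u' = T u (differentiate the exponential series
  termwise), and conversely every solution is e^{xA} u(0), because the difference w solves
  the same system with w(0) = 0 and a Gronwall estimate for sum_i w_i^2 forces w = 0.
  ODE-representable functions are closed under sums, products (Kronecker sum of the two
  systems), derivatives and antiderivatives (adjoin the antiderivative as a new component).

  For independent X_j with distribution functions F_j(x) = integral_0^x f_j, the event
  X_{k:n} <= x is the disjoint union, over the sets S with |S| >= k, of the events
  "X_j <= x exactly for j in S".  Hence P(X_{k:n} <= x) = sum_S prod_{j in S} F_j(x)
  prod_{j not in S} (1 - F_j(x)) is ODE-representable and vanishes at 0, so its derivative
  is an ME function which is a density of X_{k:n}: the density is itself an ME density,
  and in particular lies in MEam (with L = 1).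
*)
theory Submission
  imports Defs
begin

unbundle no vec_syntax

section \<open>The matrix exponential as a power series\<close>

lemma pow_mat_Suc_left:
  assumes "A \<in> carrier_mat n n"
  shows "A ^\<^sub>m Suc k = A * A ^\<^sub>m k"
proof (induction k)
  case 0
  show ?case using assms by simp
next
  case (Suc k)
  have "A ^\<^sub>m Suc (Suc k) = (A * A ^\<^sub>m k) * A"
    using Suc by simp
  also have "\<dots> = A * A ^\<^sub>m Suc k"
    using assms by (simp add: assoc_mult_mat[of _ n n _ n _ n])
  finally show ?case .
qed

lemma pow_mat_smult:
  fixes A :: "'a :: comm_ring_1 mat"
  assumes "A \<in> carrier_mat n n"
  shows "(x \<cdot>\<^sub>m A) ^\<^sub>m k = x ^ k \<cdot>\<^sub>m A ^\<^sub>m k"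
proof (induction k)
  case 0
  show ?case using assms by (auto simp: eq_matI)
next
  case (Suc k)
  then show ?case
    using assms by (auto simp: mult_smult_assoc_mat[of _ n n] mult_smult_distrib[of _ n n])
qed

lemma pow_mat_index_bound:
  fixes A :: "real mat"
  assumes A: "A \<in> carrier_mat n n" and ij: "i < n" "j < n"
  shows "\<bar>(A ^\<^sub>m k) $$ (i,j)\<bar> \<le> (\<Sum>l<n. \<Sum>l'<n. \<bar>A $$ (l,l')\<bar>) ^ k"
  using ij
proof (induction k arbitrary: j)
  case 0
  show ?case using A 0 by simp
next
  case (Suc k)
  define B where "B = (\<Sum>l<n. \<Sum>l'<n. \<bar>A $$ (l,l')\<bar>)"
  have "\<bar>(A ^\<^sub>m Suc k) $$ (i,j)\<bar> = \<bar>\<Sum>l<n. (A ^\<^sub>m k) $$ (i,l) * A $$ (l,j)\<bar>"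
    using A Suc.prems by (simp add: scalar_prod_def lessThan_atLeast0)
  also have "\<dots> \<le> (\<Sum>l<n. \<bar>(A ^\<^sub>m k) $$ (i,l)\<bar> * \<bar>A $$ (l,j)\<bar>)"
    by (rule order.trans[OF sum_abs]) (simp add: abs_mult)
  also have "\<dots> \<le> (\<Sum>l<n. B ^ k * \<bar>A $$ (l,j)\<bar>)"
    using Suc.IH Suc.prems(1) unfolding B_def by (intro sum_mono mult_right_mono) auto
  also have "\<dots> = B ^ k * (\<Sum>l<n. \<bar>A $$ (l,j)\<bar>)"
    by (simp add: sum_distrib_left)
  also have "\<dots> \<le> B ^ k * B"
  proof (intro mult_left_mono)
    show "(\<Sum>l<n. \<bar>A $$ (l,j)\<bar>) \<le> B"
      unfolding B_def by (intro sum_mono member_le_sum) (use Suc.prems in auto)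
    show "0 \<le> B ^ k" unfolding B_def by (intro zero_le_power sum_nonneg) auto
  qed
  finally show ?case by (simp add: B_def mult.commute)
qed

lemma dim_mat_exp [simp]:
  "dim_row (mat_exp A) = dim_row A" "dim_col (mat_exp A) = dim_col A"
  by (simp_all add: mat_exp_def)

lemma mat_exp_smult_index:
  fixes A :: "real mat"
  assumes A: "A \<in> carrier_mat n n" and ij: "i < n" "j < n"
  shows "mat_exp (x \<cdot>\<^sub>m A) $$ (i,j) = (\<Sum>k. (A ^\<^sub>m k) $$ (i,j) / fact k * x ^ k)"
  using A ij by (simp add: mat_exp_def pow_mat_smult[OF A] mult_ac)

lemma summable_mat_exp_series:
  fixes A :: "real mat"
  assumes A: "A \<in> carrier_mat n n" and ij: "i < n" "j < n"
  shows "summable (\<lambda>k. (A ^\<^sub>m k) $$ (i,j) / fact k * x ^ k)"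
proof (rule summable_comparison_test)
  define B where "B = (\<Sum>l<n. \<Sum>l'<n. \<bar>A $$ (l,l')\<bar>)"
  show "summable (\<lambda>k. inverse (fact k) * (B * \<bar>x\<bar>) ^ k)"
    by (rule summable_exp)
  show "\<exists>N. \<forall>k\<ge>N. norm ((A ^\<^sub>m k) $$ (i,j) / fact k * x ^ k) \<le> inverse (fact k) * (B * \<bar>x\<bar>) ^ k"
  proof (intro exI allI impI)
    fix k :: nat
    have "\<bar>(A ^\<^sub>m k) $$ (i,j)\<bar> * \<bar>x\<bar> ^ k \<le> B ^ k * \<bar>x\<bar> ^ k"
      using pow_mat_index_bound[OF A ij] unfolding B_def by (intro mult_right_mono) auto
    then show "norm ((A ^\<^sub>m k) $$ (i,j) / fact k * x ^ k) \<le> inverse (fact k) * (B * \<bar>x\<bar>) ^ k"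
      by (simp add: abs_mult power_abs divide_simps)
  qed
qed

lemma mat_exp_smult_index_has_real_derivative:
  fixes A :: "real mat"
  assumes A: "A \<in> carrier_mat n n" and ij: "i < n" "j < n"
  shows "((\<lambda>x. mat_exp (x \<cdot>\<^sub>m A) $$ (i,j)) has_real_derivative
           (\<Sum>l<n. A $$ (i,l) * mat_exp (x \<cdot>\<^sub>m A) $$ (l,j))) (at x)"
proof -
  define c where "c l k = (A ^\<^sub>m k) $$ (l,j) / fact k" for l k
  have summable: "summable (\<lambda>k. c l k * y ^ k)" if "l < n" for l y
    unfolding c_def using summable_mat_exp_series[OF A that ij(2)] .
  have diffs: "diffs (c i) k = (\<Sum>l<n. A $$ (i,l) * c l k)" for k
  proof -
    have "diffs (c i) k = (A ^\<^sub>m Suc k) $$ (i,j) / fact k"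
      by (simp add: diffs_def c_def divide_simps del: of_nat_Suc)
    also have "\<dots> = (\<Sum>l<n. A $$ (i,l) * (A ^\<^sub>m k) $$ (l,j)) / fact k"
      using A ij by (subst pow_mat_Suc_left[OF A]) (simp add: scalar_prod_def lessThan_atLeast0)
    finally show ?thesis
      by (simp add: c_def sum_divide_distrib)
  qed
  have "((\<lambda>x. \<Sum>k. c i k * x ^ k) has_real_derivative (\<Sum>k. diffs (c i) k * x ^ k)) (at x)"
    by (rule termdiffs_strong_converges_everywhere) (rule summable[OF ij(1)])
  also have "(\<Sum>k. diffs (c i) k * x ^ k) = (\<Sum>k. \<Sum>l<n. A $$ (i,l) * (c l k * x ^ k))"
    by (simp add: diffs sum_distrib_right mult.assoc)
  also have "\<dots> = (\<Sum>l<n. A $$ (i,l) * (\<Sum>k. c l k * x ^ k))"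
    by (subst suminf_sum) (auto intro!: summable_mult summable sum.cong simp: suminf_mult summable)
  finally show ?thesis
    using ij by (simp add: mat_exp_smult_index[OF A] c_def)
qed

lemma mat_exp_zero_smult_index:
  fixes A :: "real mat"
  assumes "A \<in> carrier_mat n n" "i < n" "j < n"
  shows "mat_exp (0 \<cdot>\<^sub>m A) $$ (i,j) = (if i = j then 1 else 0)"
  using assms powser_zero[of "\<lambda>k. (A ^\<^sub>m k) $$ (i,j) / fact k"]
  by (simp add: mat_exp_smult_index)

section \<open>Functions representable by linear ODE systems\<close>

definition solves_linear_ode :: "'i set \<Rightarrow> ('i \<Rightarrow> 'i \<Rightarrow> real) \<Rightarrow> ('i \<Rightarrow> real \<Rightarrow> real) \<Rightarrow> bool" where
  "solves_linear_ode I A u \<longleftrightarrow>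
     (\<forall>i\<in>I. \<forall>x\<ge>0. (u i has_real_derivative (\<Sum>j\<in>I. A i j * u j x)) (at x within {0..}))"

lemma solves_linear_odeD:
  "solves_linear_ode I A u \<Longrightarrow> i \<in> I \<Longrightarrow> 0 \<le> x \<Longrightarrow>
    (u i has_real_derivative (\<Sum>j\<in>I. A i j * u j x)) (at x within {0..})"
  unfolding solves_linear_ode_def by blast

definition ode_representable :: "(real \<Rightarrow> real) \<Rightarrow> bool" where
  "ode_representable h \<longleftrightarrow>
     (\<exists>(m::nat) A u a. solves_linear_ode {..<m} A u \<and> (\<forall>x\<ge>0. h x = (\<Sum>i<m. a i * u i x)))"

lemma ode_representableI:
  fixes I :: "'i set"
  assumes "finite I" and u: "solves_linear_ode I A u"
    and h: "\<And>x. 0 \<le> x \<Longrightarrow> h x = (\<Sum>i\<in>I. a i * u i x)"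
  shows "ode_representable h"
proof -
  obtain b where b: "bij_betw b {0..<card I} I"
    using ex_bij_betw_nat_finite[OF \<open>finite I\<close>] by blast
  have reindex: "(\<Sum>j<card I. g (b j)) = (\<Sum>j\<in>I. g j)" for g :: "'i \<Rightarrow> real"
    using sum.reindex_bij_betw[OF b, of g] by (simp add: atLeast0LessThan)
  have "b i \<in> I" if "i < card I" for i
    using b that by (auto simp: bij_betw_def)
  then show ?thesis
    unfolding ode_representable_def solves_linear_ode_def using u h
    by (intro exI[of _ "card I"] exI[of _ "\<lambda>i j. A (b i) (b j)"] exI[of _ "\<lambda>i. u (b i)"]
        exI[of _ "\<lambda>i. a (b i)"])
      (simp add: solves_linear_odeD reindex[of "\<lambda>j. A _ j * u j _"] reindex[of "\<lambda>j. a j * u j _"])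
qed

lemma ode_representableE:
  assumes "ode_representable h"
  obtains m :: nat and A u a where "solves_linear_ode {..<m} A u"
    and "\<And>x. 0 \<le> x \<Longrightarrow> h x = (\<Sum>i<m. a i * u i x)"
  using assms unfolding ode_representable_def by blast

lemma ode_representable_cong:
  "ode_representable h \<Longrightarrow> (\<And>x. 0 \<le> x \<Longrightarrow> h x = g x) \<Longrightarrow> ode_representable g"
  unfolding ode_representable_def by metis

lemma ode_representable_const: "ode_representable (\<lambda>x. c)"
  by (rule ode_representableI[where I="{()}" and A="\<lambda>_ _. 0" and u="\<lambda>_ _. 1" and a="\<lambda>_. c"])
    (auto simp: solves_linear_ode_def)

lemma ode_representable_cmult:
  assumes "ode_representable h"
  shows "ode_representable (\<lambda>x. c * h x)"
proof -
  obtain m :: nat and A u a where u: "solves_linear_ode {..<m} A u"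
    and h: "\<And>x. 0 \<le> x \<Longrightarrow> h x = (\<Sum>i<m. a i * u i x)"
    using ode_representableE[OF assms] by blast
  show ?thesis
    by (rule ode_representableI[OF _ u, where a="\<lambda>i. c * a i"])
      (simp_all add: h sum_distrib_left mult.assoc)
qed

lemma ode_representable_add:
  assumes "ode_representable h\<^sub>1" "ode_representable h\<^sub>2"
  shows "ode_representable (\<lambda>x. h\<^sub>1 x + h\<^sub>2 x)"
proof -
  obtain m\<^sub>1 :: nat and A\<^sub>1 u\<^sub>1 a\<^sub>1 where u\<^sub>1: "solves_linear_ode {..<m\<^sub>1} A\<^sub>1 u\<^sub>1"
    and h\<^sub>1: "\<And>x. 0 \<le> x \<Longrightarrow> h\<^sub>1 x = (\<Sum>i<m\<^sub>1. a\<^sub>1 i * u\<^sub>1 i x)"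
    using ode_representableE[OF assms(1)] by blast
  obtain m\<^sub>2 :: nat and A\<^sub>2 u\<^sub>2 a\<^sub>2 where u\<^sub>2: "solves_linear_ode {..<m\<^sub>2} A\<^sub>2 u\<^sub>2"
    and h\<^sub>2: "\<And>x. 0 \<le> x \<Longrightarrow> h\<^sub>2 x = (\<Sum>i<m\<^sub>2. a\<^sub>2 i * u\<^sub>2 i x)"
    using ode_representableE[OF assms(2)] by blast
  let ?I = "{..<m\<^sub>1} <+> {..<m\<^sub>2}"
  define A where "A k l = (case (k, l) of
      (Inl i, Inl j) \<Rightarrow> A\<^sub>1 i j | (Inr i, Inr j) \<Rightarrow> A\<^sub>2 i j | _ \<Rightarrow> 0)" for k l
  have sum_Plus: "(\<Sum>l\<in>?I. g l) = (\<Sum>j<m\<^sub>1. g (Inl j)) + (\<Sum>j<m\<^sub>2. g (Inr j))"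
    for g :: "nat + nat \<Rightarrow> real"
    by (simp add: sum.Plus)
  have "solves_linear_ode ?I A (case_sum u\<^sub>1 u\<^sub>2)"
    unfolding solves_linear_ode_def
    by (auto simp: sum_Plus A_def u\<^sub>1[THEN solves_linear_odeD] u\<^sub>2[THEN solves_linear_odeD])
  then show ?thesis
    by (rule ode_representableI[where a="case_sum a\<^sub>1 a\<^sub>2", rotated]) (simp_all add: sum_Plus h\<^sub>1 h\<^sub>2)
qed

lemma kronecker_sum_mult_tensor:
  fixes A\<^sub>1 A\<^sub>2 :: "nat \<Rightarrow> nat \<Rightarrow> real" and v\<^sub>1 v\<^sub>2 :: "nat \<Rightarrow> real"
  assumes ij: "i < m\<^sub>1" "j < m\<^sub>2"
  shows "(\<Sum>q\<in>{..<m\<^sub>1} \<times> {..<m\<^sub>2}. ((if snd q = j then A\<^sub>1 i (fst q) else 0)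
            + (if fst q = i then A\<^sub>2 j (snd q) else 0)) * (v\<^sub>1 (fst q) * v\<^sub>2 (snd q))) =
         (\<Sum>i'<m\<^sub>1. A\<^sub>1 i i' * v\<^sub>1 i') * v\<^sub>2 j + v\<^sub>1 i * (\<Sum>j'<m\<^sub>2. A\<^sub>2 j j' * v\<^sub>2 j')"
proof -
  have if_mult: "(if c then a else 0) * b = (if c then a * b else 0)" for c and a b :: real
    by simp
  have "(\<Sum>q\<in>{..<m\<^sub>1} \<times> {..<m\<^sub>2}. ((if snd q = j then A\<^sub>1 i (fst q) else 0)
            + (if fst q = i then A\<^sub>2 j (snd q) else 0)) * (v\<^sub>1 (fst q) * v\<^sub>2 (snd q))) =
      (\<Sum>i'<m\<^sub>1. \<Sum>j'<m\<^sub>2. if j' = j then A\<^sub>1 i i' * (v\<^sub>1 i' * v\<^sub>2 j') else 0) +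
      (\<Sum>i'<m\<^sub>1. \<Sum>j'<m\<^sub>2. if i' = i then A\<^sub>2 j j' * (v\<^sub>1 i' * v\<^sub>2 j') else 0)"
    by (simp only: sum.cartesian_product' fst_conv snd_conv distrib_right sum.distrib if_mult)
  also have "(\<Sum>i'<m\<^sub>1. \<Sum>j'<m\<^sub>2. if j' = j then A\<^sub>1 i i' * (v\<^sub>1 i' * v\<^sub>2 j') else 0) =
      (\<Sum>i'<m\<^sub>1. A\<^sub>1 i i' * v\<^sub>1 i') * v\<^sub>2 j"
    using ij by (simp add: sum_distrib_right mult.assoc)
  also have "(\<Sum>i'<m\<^sub>1. \<Sum>j'<m\<^sub>2. if i' = i then A\<^sub>2 j j' * (v\<^sub>1 i' * v\<^sub>2 j') else 0) =
      v\<^sub>1 i * (\<Sum>j'<m\<^sub>2. A\<^sub>2 j j' * v\<^sub>2 j')"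
    using ij by (subst sum.swap) (simp add: sum_distrib_left mult_ac)
  finally show ?thesis .
qed

lemma ode_representable_mult:
  assumes "ode_representable h\<^sub>1" "ode_representable h\<^sub>2"
  shows "ode_representable (\<lambda>x. h\<^sub>1 x * h\<^sub>2 x)"
proof -
  obtain m\<^sub>1 :: nat and A\<^sub>1 u\<^sub>1 a\<^sub>1 where u\<^sub>1: "solves_linear_ode {..<m\<^sub>1} A\<^sub>1 u\<^sub>1"
    and h\<^sub>1: "\<And>x. 0 \<le> x \<Longrightarrow> h\<^sub>1 x = (\<Sum>i<m\<^sub>1. a\<^sub>1 i * u\<^sub>1 i x)"
    using ode_representableE[OF assms(1)] by blast
  obtain m\<^sub>2 :: nat and A\<^sub>2 u\<^sub>2 a\<^sub>2 where u\<^sub>2: "solves_linear_ode {..<m\<^sub>2} A\<^sub>2 u\<^sub>2"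
    and h\<^sub>2: "\<And>x. 0 \<le> x \<Longrightarrow> h\<^sub>2 x = (\<Sum>i<m\<^sub>2. a\<^sub>2 i * u\<^sub>2 i x)"
    using ode_representableE[OF assms(2)] by blast
  let ?I = "{..<m\<^sub>1} \<times> {..<m\<^sub>2}"
  define u where "u p = (\<lambda>x. u\<^sub>1 (fst p) x * u\<^sub>2 (snd p) x)" for p
  \<comment> \<open>the Kronecker sum of \<open>A\<^sub>1\<close> and \<open>A\<^sub>2\<close>, by the product rule\<close>
  define A where "A p q = (if snd q = snd p then A\<^sub>1 (fst p) (fst q) else 0)
      + (if fst q = fst p then A\<^sub>2 (snd p) (snd q) else 0)" for p q :: "nat \<times> nat"
  have "solves_linear_ode ?I A u"
    unfolding solves_linear_ode_def
  proof (intro ballI allI impI)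
    fix p and x :: real
    assume "p \<in> ?I" and x: "0 \<le> x"
    then obtain i j where p: "p = (i, j)" and ij: "i < m\<^sub>1" "j < m\<^sub>2"
      by auto
    have "(\<Sum>q\<in>?I. A p q * u q x) =
        (\<Sum>i'<m\<^sub>1. A\<^sub>1 i i' * u\<^sub>1 i' x) * u\<^sub>2 j x + u\<^sub>1 i x * (\<Sum>j'<m\<^sub>2. A\<^sub>2 j j' * u\<^sub>2 j' x)"
      using kronecker_sum_mult_tensor[OF ij, of A\<^sub>1 A\<^sub>2 "\<lambda>i'. u\<^sub>1 i' x" "\<lambda>j'. u\<^sub>2 j' x"]
      by (simp only: A_def u_def p fst_conv snd_conv)
    then show "(u p has_real_derivative (\<Sum>q\<in>?I. A p q * u q x)) (at x within {0..})"
      using DERIV_mult[OF solves_linear_odeD[OF u\<^sub>1 _ x] solves_linear_odeD[OF u\<^sub>2 _ x]] ij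
      by (simp add: p u_def mult.commute)
  qed
  then show ?thesis
    by (rule ode_representableI[where a="\<lambda>p. a\<^sub>1 (fst p) * a\<^sub>2 (snd p)", rotated])
      (simp_all add: u_def h\<^sub>1 h\<^sub>2 sum_product sum.cartesian_product' mult_ac)
qed

lemma ode_representable_sum:
  "finite S \<Longrightarrow> (\<And>s. s \<in> S \<Longrightarrow> ode_representable (h s)) \<Longrightarrow>
    ode_representable (\<lambda>x. \<Sum>s\<in>S. h s x)"
  by (induction S rule: finite_induct) (auto intro: ode_representable_const ode_representable_add)

lemma ode_representable_prod:
  "finite S \<Longrightarrow> (\<And>s. s \<in> S \<Longrightarrow> ode_representable (h s)) \<Longrightarrow>
    ode_representable (\<lambda>x. \<Prod>s\<in>S. h s x)"
  by (induction S rule: finite_induct) (auto intro: ode_representable_const ode_representable_mult)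

lemma ode_representable_diff:
  assumes "ode_representable h\<^sub>1" "ode_representable h\<^sub>2"
  shows "ode_representable (\<lambda>x. h\<^sub>1 x - h\<^sub>2 x)"
  using ode_representable_add[OF assms(1) ode_representable_cmult[OF assms(2), of "-1"]] by simp

lemma ode_representable_continuous_on:
  assumes "ode_representable h"
  shows "continuous_on {0..} h"
proof -
  obtain m :: nat and A u a where u: "solves_linear_ode {..<m} A u"
    and h: "\<And>x. 0 \<le> x \<Longrightarrow> h x = (\<Sum>i<m. a i * u i x)"
    using ode_representableE[OF assms] by blast
  have "continuous_on {0..} (u i)" if "i < m" for i
    unfolding continuous_on_eq_continuous_within
    using DERIV_continuous[OF solves_linear_odeD[OF u]] that by auto
  then have "continuous_on {0..} (\<lambda>x. \<Sum>i<m. a i * u i x)"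
    by (intro continuous_on_sum continuous_on_mult_left) auto
  then show ?thesis
    by (rule continuous_on_cong[THEN iffD1, rotated 2]) (auto simp: h)
qed

lemma ode_representable_derivative:
  assumes "ode_representable h"
  obtains h' where "ode_representable h'"
    and "\<And>x. 0 \<le> x \<Longrightarrow> (h has_real_derivative h' x) (at x within {0..})"
proof -
  obtain m :: nat and A u a where u: "solves_linear_ode {..<m} A u"
    and h: "\<And>x. 0 \<le> x \<Longrightarrow> h x = (\<Sum>i<m. a i * u i x)"
    using ode_representableE[OF assms] by blast
  define h' where "h' x = (\<Sum>i<m. a i * (\<Sum>j<m. A i j * u j x))" for x
  have "ode_representable h'"
  proof (rule ode_representableI[OF _ u, where a="\<lambda>j. \<Sum>i<m. a i * A i j"])
    show "h' x = (\<Sum>j\<in>{..<m}. (\<Sum>i<m. a i * A i j) * u j x)" for x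
      unfolding h'_def by (simp add: sum_distrib_left sum_distrib_right mult_ac) (rule sum.swap)
  qed simp
  moreover have "(h has_real_derivative h' x) (at x within {0..})" if "0 \<le> x" for x
  proof -
    have "((\<lambda>x. \<Sum>i<m. a i * u i x) has_real_derivative h' x) (at x within {0..})"
      unfolding h'_def using solves_linear_odeD[OF u _ that] by (intro DERIV_sum DERIV_cmult) simp
    then show ?thesis
      by (rule has_field_derivative_transform_within[where d=1]) (use that h in auto)
  qed
  ultimately show ?thesis
    using that by blast
qed

lemma ode_representable_integral:
  assumes "ode_representable f"
  shows "ode_representable (\<lambda>x. integral {0..x} f)"
proof -
  obtain m :: nat and A u a where u: "solves_linear_ode {..<m} A u"
    and f: "\<And>x. 0 \<le> x \<Longrightarrow> f x = (\<Sum>i<m. a i * u i x)"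
    using ode_representableE[OF assms] by blast
  have F: "((\<lambda>y. integral {0..y} f) has_real_derivative (\<Sum>j<m. a j * u j x)) (at x within {0..})"
    if "0 \<le> x" for x
  proof -
    have "((\<lambda>y. integral {0..y} f) has_real_derivative f x) (at x within {0..x + 1})"
      using that ode_representable_continuous_on[OF assms]
      by (intro integral_has_real_derivative) (auto intro: continuous_on_subset)
    moreover have "at x within {0..x + 1} = at x within {0..}"
      by (rule at_within_nhd[of x "{..<x + 1}"]) auto
    ultimately have "((\<lambda>y. integral {0..y} f) has_real_derivative f x) (at x within {0..})"
      by simp
    then show ?thesis
      by (simp only: f[OF that])
  qed
  \<comment> \<open>adjoin the antiderivative as an extra component, whose derivative is \<open>\<Sum>j. a j u j\<close>\<close>
  let ?I = "insert None (Some ` {..<m})"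
  define u' where "u' k = (case k of None \<Rightarrow> (\<lambda>y. integral {0..y} f) | Some i \<Rightarrow> u i)" for k
  define A' where "A' k l = (case (k, l) of
      (None, Some j) \<Rightarrow> a j | (Some i, Some j) \<Rightarrow> A i j | _ \<Rightarrow> 0)" for k l
  have sum_option: "(\<Sum>l\<in>?I. g l) = g None + (\<Sum>j<m. g (Some j))" for g :: "nat option \<Rightarrow> real"
    by (simp add: sum.reindex)
  have "solves_linear_ode ?I A' u'"
    unfolding solves_linear_ode_def
    by (auto simp: sum_option A'_def u'_def F solves_linear_odeD[OF u])
  then show ?thesis
    by (rule ode_representableI[where a="\<lambda>k. if k = None then 1 else 0", rotated])
      (simp_all add: sum_option u'_def)
qed

section \<open>ME functions are the ODE-representable functions\<close>

lemma nonpos_if_deriv_le_linear: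
  fixes q q' :: "real \<Rightarrow> real"
  assumes q0: "q 0 = 0"
    and q: "\<And>y. 0 \<le> y \<Longrightarrow> (q has_real_derivative q' y) (at y within {0..})"
    and le: "\<And>y. 0 \<le> y \<Longrightarrow> q' y \<le> K * q y"
    and x: "0 \<le> x"
  shows "q x \<le> 0"
proof -
  define p where "p y = exp (- K * y) * q y" for y
  have p: "(p has_real_derivative exp (- K * y) * (q' y - K * q y)) (at y within {0..})"
    if "0 \<le> y" for y
  proof -
    have "((\<lambda>y. exp (- K * y)) has_real_derivative exp (- K * y) * (- K)) (at y within {0..})"
      by (rule DERIV_cong[OF DERIV_chain2[OF DERIV_exp DERIV_cmult_Id]]) simp
    from DERIV_mult[OF this q[OF that]] show ?thesis
      unfolding p_def by (rule DERIV_cong) (simp add: algebra_simps)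
  qed
  have "p x \<le> p 0"
  proof (rule DERIV_nonpos_imp_decreasing_open[OF x])
    fix y :: real
    assume y: "0 < y" "y < x"
    have "at y within {0..} = at y"
      by (rule at_within_nhd[of y "{0<..}"]) (use y in auto)
    then show "\<exists>d. (p has_real_derivative d) (at y) \<and> d \<le> 0"
      using p[of y] le[of y] y by (auto intro!: mult_nonneg_nonpos)
  next
    have "continuous_on {0..} p"
      unfolding continuous_on_eq_continuous_within using DERIV_continuous[OF p] by auto
    then show "continuous_on {0..x} p"
      by (rule continuous_on_subset) auto
  qed
  then show ?thesis
    by (simp add: p_def q0 mult_le_0_iff)
qed

lemma solves_linear_ode_zero_initial:
  fixes w :: "'i \<Rightarrow> real \<Rightarrow> real"
  assumes "finite I" and w: "solves_linear_ode I A w" and w0: "\<And>i. i \<in> I \<Longrightarrow> w i 0 = 0"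
    and i: "i \<in> I" and x: "0 \<le> x"
  shows "w i x = 0"
proof -
  define q where "q y = (\<Sum>i\<in>I. w i y * w i y)" for y
  define q' where "q' y = (\<Sum>i\<in>I. 2 * w i y * (\<Sum>j\<in>I. A i j * w j y))" for y
  define K where "K = 2 * (\<Sum>i\<in>I. \<Sum>j\<in>I. \<bar>A i j\<bar>)"
  have sq_le: "w i y * w i y \<le> q y" if "i \<in> I" for i y
    unfolding q_def using \<open>finite I\<close> that by (intro member_le_sum) auto
  \<comment> \<open>the energy \<open>q = \<Sum>i. w\<^sub>i\<^sup>2\<close> grows at most exponentially\<close>
  have "q' y \<le> K * q y" for y
  proof -
    have prod_le: "\<bar>w i y * w j y\<bar> \<le> q y" if "i \<in> I" "j \<in> I" for i j
    proof -
      have "0 \<le> (\<bar>w i y\<bar> - \<bar>w j y\<bar>) * (\<bar>w i y\<bar> - \<bar>w j y\<bar>)"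
        by simp
      then have "2 * \<bar>w i y * w j y\<bar> \<le> w i y * w i y + w j y * w j y"
        by (simp add: abs_mult algebra_simps)
      then show ?thesis
        using sq_le[OF that(1), of y] sq_le[OF that(2), of y] by linarith
    qed
    have "q' y = 2 * (\<Sum>i\<in>I. \<Sum>j\<in>I. A i j * (w i y * w j y))"
      unfolding q'_def by (simp add: sum_distrib_left mult_ac)
    also have "\<dots> \<le> 2 * (\<Sum>i\<in>I. \<Sum>j\<in>I. \<bar>A i j\<bar> * q y)"
    proof (intro mult_left_mono sum_mono)
      fix i j
      assume "i \<in> I" "j \<in> I"
      have "A i j * (w i y * w j y) \<le> \<bar>A i j\<bar> * \<bar>w i y * w j y\<bar>"
        by (metis abs_ge_self abs_mult)
      also have "\<dots> \<le> \<bar>A i j\<bar> * q y"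
        using prod_le[OF \<open>i \<in> I\<close> \<open>j \<in> I\<close>] by (intro mult_left_mono) auto
      finally show "A i j * (w i y * w j y) \<le> \<bar>A i j\<bar> * q y" .
    qed simp
    also have "\<dots> = K * q y"
      unfolding K_def by (simp add: sum_distrib_right)
    finally show ?thesis .
  qed
  moreover have "(q has_real_derivative q' y) (at y within {0..})" if "0 \<le> y" for y
    unfolding q_def q'_def
  proof (rule DERIV_sum)
    fix i
    assume "i \<in> I"
    from DERIV_mult[OF solves_linear_odeD[OF w this that] solves_linear_odeD[OF w this that]]
    show "((\<lambda>x. w i x * w i x) has_real_derivative 2 * w i y * (\<Sum>j\<in>I. A i j * w j y))
        (at y within {0..})"
      by (rule DERIV_cong) (simp add: algebra_simps)
  qed
  ultimately have "q x \<le> 0"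
    using x by (intro nonpos_if_deriv_le_linear[of q q' K]) (simp_all add: q_def w0)
  then have "w i x * w i x \<le> 0"
    using sq_le[OF i, of x] by linarith
  then show ?thesis
    by (simp add: mult_le_0_iff, linarith)
qed

lemma solves_linear_ode_eq_mat_exp:
  assumes u: "solves_linear_ode {..<m} A u" and i: "i < m" and x: "0 \<le> x"
  shows "u i x = (\<Sum>j<m. mat_exp (x \<cdot>\<^sub>m mat m m (\<lambda>(i, j). A i j)) $$ (i,j) * u j 0)"
proof -
  define T where "T = mat m m (\<lambda>(i, j). A i j)"
  have T: "T \<in> carrier_mat m m"
    by (simp add: T_def)
  define E where "E x i j = mat_exp (x \<cdot>\<^sub>m T) $$ (i,j)" for x i j
  have E: "((\<lambda>x. E x i j) has_real_derivative (\<Sum>l<m. A i l * E x l j)) (at x)"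
    if "i < m" "j < m" for i j x
  proof -
    have "T $$ (i,l) = A i l" if "l < m" for l
      using \<open>i < m\<close> that by (simp add: T_def)
    then show ?thesis
      using mat_exp_smult_index_has_real_derivative[OF T that] by (simp add: E_def)
  qed
  define w where "w i = (\<lambda>x. u i x - (\<Sum>j<m. E x i j * u j 0))" for i
  have w: "solves_linear_ode {..<m} A w"
    unfolding solves_linear_ode_def
  proof (intro ballI allI impI)
    fix i and x :: real
    assume i: "i \<in> {..<m}" and x: "0 \<le> x"
    have "((\<lambda>x. \<Sum>j<m. E x i j * u j 0) has_real_derivative
        (\<Sum>j<m. (\<Sum>l<m. A i l * E x l j) * u j 0)) (at x)"
      using i by (intro DERIV_sum DERIV_cmult_right E) auto
    also have "(\<Sum>j<m. (\<Sum>l<m. A i l * E x l j) * u j 0) = (\<Sum>l<m. A i l * (\<Sum>j<m. E x l j * u j 0))"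
      by (simp add: sum_distrib_left sum_distrib_right mult_ac) (rule sum.swap)
    finally have "((\<lambda>x. \<Sum>j<m. E x i j * u j 0) has_real_derivative
        (\<Sum>l<m. A i l * (\<Sum>j<m. E x l j * u j 0))) (at x within {0..})"
      by (rule has_field_derivative_at_within)
    from DERIV_diff[OF solves_linear_odeD[OF u i x] this]
    have "(w i has_real_derivative
        (\<Sum>j<m. A i j * u j x) - (\<Sum>l<m. A i l * (\<Sum>j<m. E x l j * u j 0))) (at x within {0..})"
      by (simp add: w_def)
    then show "(w i has_real_derivative (\<Sum>j\<in>{..<m}. A i j * w j x)) (at x within {0..})"
      by (simp add: w_def right_diff_distrib sum_subtractf)
  qed
  have w0: "w i 0 = 0" if "i \<in> {..<m}" for i
  proof -
    have "(\<Sum>j<m. E 0 i j * u j 0) = (\<Sum>j<m. if i = j then u j 0 else 0)"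
      using that by (intro sum.cong) (simp_all add: E_def mat_exp_zero_smult_index[OF T])
    then show ?thesis
      using that by (simp add: w_def)
  qed
  have "w i x = 0"
    by (rule solves_linear_ode_zero_initial[OF _ w w0]) (use i x in auto)
  then show ?thesis
    by (simp add: w_def E_def T_def)
qed

definition ME_function :: "(real \<Rightarrow> real) \<Rightarrow> bool" where
  "ME_function h \<longleftrightarrow> (\<exists>m \<alpha> T t. \<alpha> \<in> carrier_vec m \<and> T \<in> carrier_mat m m \<and> t \<in> carrier_vec m \<and>
     (\<forall>x\<ge>0. h x = scalar_prod \<alpha> (mat_exp (x \<cdot>\<^sub>m T) *\<^sub>v t)))"

lemma ME_density_iff_ME_function:
  "ME_density f \<longleftrightarrow>
    ME_function f \<and> (\<forall>x<0. f x = 0) \<and> (\<forall>x. 0 \<le> f x) \<and> (f has_integral 1) {0..}"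
  unfolding ME_density_def ME_function_def by blast

lemma scalar_prod_mat_exp_mult_vec:
  assumes "\<alpha> \<in> carrier_vec m" "T \<in> carrier_mat m m" "t \<in> carrier_vec m"
  shows "scalar_prod \<alpha> (mat_exp (x \<cdot>\<^sub>m T) *\<^sub>v t) =
    (\<Sum>i<m. \<alpha> $ i * (\<Sum>j<m. mat_exp (x \<cdot>\<^sub>m T) $$ (i,j) * t $ j))"
  using assms by (auto simp: scalar_prod_def lessThan_atLeast0 intro!: sum.cong)

lemma ode_representable_scalar_prod_mat_exp:
  assumes \<alpha>: "\<alpha> \<in> carrier_vec m" and T: "T \<in> carrier_mat m m" and t: "t \<in> carrier_vec m"
  shows "ode_representable (\<lambda>x. scalar_prod \<alpha> (mat_exp (x \<cdot>\<^sub>m T) *\<^sub>v t))"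
proof (rule ode_representableI[where I="{..<m}" and A="\<lambda>i j. T $$ (i,j)"])
  show "solves_linear_ode {..<m} (\<lambda>i j. T $$ (i,j)) (\<lambda>i x. \<Sum>j<m. mat_exp (x \<cdot>\<^sub>m T) $$ (i,j) * t $ j)"
    unfolding solves_linear_ode_def
  proof (intro ballI allI impI)
    fix i and x :: real
    assume i: "i \<in> {..<m}"
    have "((\<lambda>x. \<Sum>j<m. mat_exp (x \<cdot>\<^sub>m T) $$ (i,j) * t $ j) has_real_derivative
        (\<Sum>j<m. (\<Sum>l<m. T $$ (i,l) * mat_exp (x \<cdot>\<^sub>m T) $$ (l,j)) * t $ j)) (at x)"
      using i mat_exp_smult_index_has_real_derivative[OF T] by (auto intro!: DERIV_sum DERIV_cmult_right)
    also have "(\<Sum>j<m. (\<Sum>l<m. T $$ (i,l) * mat_exp (x \<cdot>\<^sub>m T) $$ (l,j)) * t $ j) =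
        (\<Sum>l<m. T $$ (i,l) * (\<Sum>j<m. mat_exp (x \<cdot>\<^sub>m T) $$ (l,j) * t $ j))"
      by (simp add: sum_distrib_left sum_distrib_right mult_ac) (rule sum.swap)
    finally show "((\<lambda>x. \<Sum>j<m. mat_exp (x \<cdot>\<^sub>m T) $$ (i,j) * t $ j) has_real_derivative
        (\<Sum>l\<in>{..<m}. T $$ (i,l) * (\<Sum>j<m. mat_exp (x \<cdot>\<^sub>m T) $$ (l,j) * t $ j))) (at x within {0..})"
      by (rule has_field_derivative_at_within)
  qed
qed (simp_all add: scalar_prod_mat_exp_mult_vec[OF \<alpha> T t])

lemma ME_function_if_ode_representable:
  assumes "ode_representable h"
  shows "ME_function h"
proof -
  obtain m :: nat and A u a where u: "solves_linear_ode {..<m} A u"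
    and h: "\<And>x. 0 \<le> x \<Longrightarrow> h x = (\<Sum>i<m. a i * u i x)"
    using ode_representableE[OF assms] by blast
  define T where "T = mat m m (\<lambda>(i, j). A i j)"
  have "h x = scalar_prod (vec m a) (mat_exp (x \<cdot>\<^sub>m T) *\<^sub>v vec m (\<lambda>j. u j 0))" if "0 \<le> x" for x
    using that by (simp add: h scalar_prod_mat_exp_mult_vec[of _ m] T_def
        solves_linear_ode_eq_mat_exp[OF u _ that])
  then show ?thesis
    unfolding ME_function_def
    by (intro exI[of _ m] exI[of _ "vec m a"] exI[of _ T] exI[of _ "vec m (\<lambda>j. u j 0)"])
      (simp add: T_def)
qed

lemma ode_representable_iff_ME_function: "ode_representable h \<longleftrightarrow> ME_function h"
proof
  assume "ME_function h"
  then obtain m \<alpha> T t where "\<alpha> \<in> carrier_vec m" "T \<in> carrier_mat m m" "t \<in> carrier_vec m"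
    and "\<forall>x\<ge>0. h x = scalar_prod \<alpha> (mat_exp (x \<cdot>\<^sub>m T) *\<^sub>v t)"
    unfolding ME_function_def by blast
  then show "ode_representable h"
    by (intro ode_representable_cong[OF ode_representable_scalar_prod_mat_exp]) auto
qed (rule ME_function_if_ode_representable)

section \<open>Distribution functions of order statistics\<close>

lemma sorted_nth_le_iff_card:
  fixes s :: "'a :: linorder list"
  assumes s: "sorted s" and i: "i < length s"
  shows "s ! i \<le> x \<longleftrightarrow> Suc i \<le> card {p. p < length s \<and> s ! p \<le> x}"
proof
  assume le: "s ! i \<le> x"
  have "{0..<Suc i} \<subseteq> {p. p < length s \<and> s ! p \<le> x}"
  proof
    fix p
    assume "p \<in> {0..<Suc i}"
    then have "p \<le> i"
      by simp
    then show "p \<in> {p. p < length s \<and> s ! p \<le> x}"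
      using sorted_nth_mono[OF s \<open>p \<le> i\<close> i] le i by simp
  qed
  from card_mono[OF _ this] show "Suc i \<le> card {p. p < length s \<and> s ! p \<le> x}"
    by simp
next
  assume card: "Suc i \<le> card {p. p < length s \<and> s ! p \<le> x}"
  show "s ! i \<le> x"
  proof (rule ccontr)
    assume "\<not> s ! i \<le> x"
    then have "{p. p < length s \<and> s ! p \<le> x} \<subseteq> {..<i}"
      using sorted_nth_mono[OF s, of i] by (auto simp: not_less) (meson le_less_trans not_le)
    from card_mono[OF _ this] card show False
      by simp
  qed
qed

lemma order_stat_le_iff:
  assumes "1 \<le> k" "k \<le> n"
  shows "order_stat X n k \<omega> \<le> x \<longleftrightarrow> k \<le> card {j\<in>{1..n}. X j \<omega> \<le> x}"
proof -
  define xs where "xs = map (\<lambda>j. X j \<omega>) [1..<n+1]"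
  have "order_stat X n k \<omega> \<le> x \<longleftrightarrow> Suc (k - 1) \<le> card {p. p < n \<and> sort xs ! p \<le> x}"
    unfolding order_stat_def xs_def[symmetric]
    using sorted_nth_le_iff_card[of "sort xs" "k - 1" x] assms by (simp add: xs_def)
  also have "card {p. p < n \<and> sort xs ! p \<le> x} = length (filter (\<lambda>v. v \<le> x) xs)"
    using length_filter_conv_card[of "\<lambda>v. v \<le> x" "sort xs"] by (simp add: xs_def filter_sort)
  also have "\<dots> = length (filter (\<lambda>j. X j \<omega> \<le> x) [1..<n+1])"
    by (simp add: xs_def filter_map comp_def)
  also have "\<dots> = card {j\<in>{1..n}. X j \<omega> \<le> x}"
    by (subst distinct_card[symmetric]) (auto intro: arg_cong[where f=card])
  finally show ?thesis
    using assms by simp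
qed

lemma order_stat_le_eq_Union:
  assumes "1 \<le> k" "k \<le> n"
  shows "{\<omega>\<in>\<Omega>. order_stat X n k \<omega> \<le> x} =
    (\<Union>S\<in>{S. S \<subseteq> {1..n} \<and> k \<le> card S}. {\<omega>\<in>\<Omega>. \<forall>j\<in>{1..n}. X j \<omega> \<le> x \<longleftrightarrow> j \<in> S})"
proof (intro equalityI subsetI)
  fix \<omega>
  assume "\<omega> \<in> {\<omega>\<in>\<Omega>. order_stat X n k \<omega> \<le> x}"
  then show "\<omega> \<in> (\<Union>S\<in>{S. S \<subseteq> {1..n} \<and> k \<le> card S}. {\<omega>\<in>\<Omega>. \<forall>j\<in>{1..n}. X j \<omega> \<le> x \<longleftrightarrow> j \<in> S})"
    using order_stat_le_iff[OF assms, of X \<omega> x] by (intro UN_I[of "{j\<in>{1..n}. X j \<omega> \<le> x}"]) auto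
next
  fix \<omega>
  assume "\<omega> \<in> (\<Union>S\<in>{S. S \<subseteq> {1..n} \<and> k \<le> card S}. {\<omega>\<in>\<Omega>. \<forall>j\<in>{1..n}. X j \<omega> \<le> x \<longleftrightarrow> j \<in> S})"
  then obtain S where S: "S \<subseteq> {1..n}" "k \<le> card S" "\<omega> \<in> \<Omega>"
    and "\<forall>j\<in>{1..n}. X j \<omega> \<le> x \<longleftrightarrow> j \<in> S"
    by auto
  then have "S = {j\<in>{1..n}. X j \<omega> \<le> x}"
    by auto
  with S show "\<omega> \<in> {\<omega>\<in>\<Omega>. order_stat X n k \<omega> \<le> x}"
    using order_stat_le_iff[OF assms, of X \<omega> x] by auto
qed

lemma sets_Collect_le_pattern:
  fixes X :: "'i \<Rightarrow> 'a \<Rightarrow> real"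
  assumes "finite I" and X: "\<And>j. j \<in> I \<Longrightarrow> X j \<in> borel_measurable M"
  shows "{\<omega>\<in>space M. \<forall>j\<in>I. X j \<omega> \<le> x \<longleftrightarrow> j \<in> S} \<in> sets M"
proof (rule sets.sets_Collect_finite_All[OF _ \<open>finite I\<close>])
  fix j
  assume "j \<in> I"
  have "{\<omega>\<in>space M. X j \<omega> \<le> x} \<in> sets M"
    using X[OF \<open>j \<in> I\<close>] by (simp add: borel_measurable_iff_le)
  then show "{\<omega>\<in>space M. X j \<omega> \<le> x \<longleftrightarrow> j \<in> S} \<in> sets M"
    by (cases "j \<in> S") (auto intro: sets.sets_Collect_neg)
qed

lemma borel_measurable_order_stat:
  assumes "1 \<le> k" "k \<le> n" and X: "\<And>j. j \<in> {1..n} \<Longrightarrow> X j \<in> borel_measurable M"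
  shows "order_stat X n k \<in> borel_measurable M"
  unfolding borel_measurable_iff_le order_stat_le_eq_Union[OF assms(1,2)]
  by (intro allI sets.finite_UN sets_Collect_le_pattern X) (auto intro: finite_subset[of _ "Pow {1..n}"])

context prob_space
begin

lemma prob_indep_le_pattern:
  fixes X :: "'i \<Rightarrow> 'a \<Rightarrow> real"
  assumes indep: "indep_vars (\<lambda>_. borel) X I" and "finite I" and "S \<subseteq> I"
  shows "prob {\<omega>\<in>space M. \<forall>j\<in>I. X j \<omega> \<le> x \<longleftrightarrow> j \<in> S} =
    (\<Prod>j\<in>S. prob {\<omega>\<in>space M. X j \<omega> \<le> x}) * (\<Prod>j\<in>I - S. 1 - prob {\<omega>\<in>space M. X j \<omega> \<le> x})"
proof (cases "I = {}")
  case True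
  then show ?thesis
    using \<open>S \<subseteq> I\<close> by (simp add: prob_space)
next
  case False
  define B where "B j = {y. y \<le> x \<longleftrightarrow> j \<in> S}" for j
  have B: "B j \<in> sets borel" for j
    by (cases "j \<in> S")
      (simp_all add: B_def not_le greaterThan_def[symmetric] atMost_def[symmetric]
        atMost_borel greaterThan_borel)
  have X: "X j \<in> borel_measurable M" if "j \<in> I" for j
    using indep that unfolding indep_vars_def2 by simp
  have "prob {\<omega>\<in>space M. \<forall>j\<in>I. X j \<omega> \<le> x \<longleftrightarrow> j \<in> S} = prob (\<Inter>j\<in>I. X j -` B j \<inter> space M)"
    using False by (intro arg_cong[where f=prob]) (auto simp: B_def)
  also have "\<dots> = (\<Prod>j\<in>I. prob (X j -` B j \<inter> space M))"
    using False \<open>finite I\<close> B by (intro indep_varsD[OF indep]) auto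
  also have "\<dots> = (\<Prod>j\<in>I. if j \<in> S then prob {\<omega>\<in>space M. X j \<omega> \<le> x}
      else 1 - prob {\<omega>\<in>space M. X j \<omega> \<le> x})"
  proof (rule prod.cong[OF refl])
    fix j
    assume "j \<in> I"
    have "{\<omega>\<in>space M. X j \<omega> \<le> x} \<in> events"
      using X[OF \<open>j \<in> I\<close>] by (simp add: borel_measurable_iff_le)
    moreover have "X j -` B j \<inter> space M =
        (if j \<in> S then {\<omega>\<in>space M. X j \<omega> \<le> x} else space M - {\<omega>\<in>space M. X j \<omega> \<le> x})"
      by (auto simp: B_def)
    ultimately show "prob (X j -` B j \<inter> space M) = (if j \<in> S then prob {\<omega>\<in>space M. X j \<omega> \<le> x}
        else 1 - prob {\<omega>\<in>space M. X j \<omega> \<le> x})"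
      by (simp add: prob_compl)
  qed
  also have "\<dots> = (\<Prod>j\<in>S. prob {\<omega>\<in>space M. X j \<omega> \<le> x}) *
      (\<Prod>j\<in>I - S. 1 - prob {\<omega>\<in>space M. X j \<omega> \<le> x})"
    using \<open>finite I\<close> \<open>S \<subseteq> I\<close> by (simp add: prod.If_cases Int_absorb1 Diff_eq)
  finally show ?thesis .
qed

lemma prob_order_stat_le:
  assumes "1 \<le> k" "k \<le> n" and indep: "indep_vars (\<lambda>_. borel) X {1..n}"
  shows "prob {\<omega>\<in>space M. order_stat X n k \<omega> \<le> x} =
    (\<Sum>S\<in>{S. S \<subseteq> {1..n} \<and> k \<le> card S}. (\<Prod>j\<in>S. prob {\<omega>\<in>space M. X j \<omega> \<le> x}) *
      (\<Prod>j\<in>{1..n} - S. 1 - prob {\<omega>\<in>space M. X j \<omega> \<le> x}))"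
proof -
  let ?\<S> = "{S. S \<subseteq> {1..n} \<and> k \<le> card S}"
  have "{\<omega>\<in>space M. \<forall>j\<in>{1..n}. X j \<omega> \<le> x \<longleftrightarrow> j \<in> S} \<in> events" for S
    using indep unfolding indep_vars_def2 by (intro sets_Collect_le_pattern) auto
  then have "prob {\<omega>\<in>space M. order_stat X n k \<omega> \<le> x} =
      (\<Sum>S\<in>?\<S>. prob {\<omega>\<in>space M. \<forall>j\<in>{1..n}. X j \<omega> \<le> x \<longleftrightarrow> j \<in> S})"
    unfolding order_stat_le_eq_Union[OF assms(1,2)]
    by (intro finite_measure_finite_Union)
      (auto simp: disjoint_family_on_def intro: finite_subset[of _ "Pow {1..n}"])
  also have "\<dots> = (\<Sum>S\<in>?\<S>. (\<Prod>j\<in>S. prob {\<omega>\<in>space M. X j \<omega> \<le> x}) *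
      (\<Prod>j\<in>{1..n} - S. 1 - prob {\<omega>\<in>space M. X j \<omega> \<le> x}))"
    by (intro sum.cong refl prob_indep_le_pattern[OF indep]) auto
  finally show ?thesis .
qed

lemma ode_representable_cdf_order_stat:
  assumes "1 \<le> k" "k \<le> n" and indep: "indep_vars (\<lambda>_. borel) X {1..n}"
    and F: "\<And>j. j \<in> {1..n} \<Longrightarrow> ode_representable (\<lambda>x. prob {\<omega>\<in>space M. X j \<omega> \<le> x})"
    and F_0: "\<And>j. j \<in> {1..n} \<Longrightarrow> prob {\<omega>\<in>space M. X j \<omega> \<le> 0} = 0"
  shows "ode_representable (\<lambda>x. prob {\<omega>\<in>space M. order_stat X n k \<omega> \<le> x})"
    and "prob {\<omega>\<in>space M. order_stat X n k \<omega> \<le> 0} = 0"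
proof -
  define F where "F j = (\<lambda>x. prob {\<omega>\<in>space M. X j \<omega> \<le> x})" for j
  let ?\<S> = "{S. S \<subseteq> {1..n} \<and> k \<le> card S}"
  have cdf: "prob {\<omega>\<in>space M. order_stat X n k \<omega> \<le> x} =
      (\<Sum>S\<in>?\<S>. (\<Prod>j\<in>S. F j x) * (\<Prod>j\<in>{1..n} - S. 1 - F j x))" for x
    unfolding F_def by (rule prob_order_stat_le[OF assms(1,2) indep])
  have "ode_representable (\<lambda>x. (\<Prod>j\<in>S. F j x) * (\<Prod>j\<in>{1..n} - S. 1 - F j x))" if "S \<in> ?\<S>" for S
    using that F unfolding F_def
    by (intro ode_representable_mult ode_representable_prod ode_representable_diff
        ode_representable_const) (auto intro: finite_subset)
  then show "ode_representable (\<lambda>x. prob {\<omega>\<in>space M. order_stat X n k \<omega> \<le> x})"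
    unfolding cdf by (intro ode_representable_sum) (auto intro: finite_subset[of _ "Pow {1..n}"])
  have "(\<Prod>j\<in>S. F j 0) = 0" if S: "S \<in> ?\<S>" for S
  proof -
    obtain j where j: "j \<in> S"
      using S \<open>1 \<le> k\<close> by fastforce
    then have "F j 0 = 0"
      using S F_0[of j] unfolding F_def by auto
    with j S show ?thesis
      by (intro prod_zero) (auto intro: finite_subset)
  qed
  then show "prob {\<omega>\<in>space M. order_stat X n k \<omega> \<le> 0} = 0"
    unfolding cdf by (intro sum.neutral) simp
qed

lemma prob_le_eq_integral_density:
  fixes g :: "real \<Rightarrow> real"
  assumes Y: "distributed M lborel Y (\<lambda>x. ennreal (g x))" and g: "\<And>x. 0 \<le> g x"
    and g_neg: "\<And>x. x < 0 \<Longrightarrow> g x = 0" and int: "g integrable_on {0..x}"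
  shows "prob {\<omega>\<in>space M. Y \<omega> \<le> x} = integral {0..x} g"
proof -
  have "emeasure M (Y -` {..x} \<inter> space M) = (\<integral>\<^sup>+y. ennreal (g y) * indicator {..x} y \<partial>lborel)"
    by (rule distributed_emeasure[OF Y]) simp
  also have "\<dots> = (\<integral>\<^sup>+y. ennreal (g y) * indicator {0..x} y \<partial>lborel)"
    by (intro nn_integral_cong) (auto simp: indicator_def g_neg not_le)
  also have "\<dots> = ennreal (integral {0..x} g)"
    using g int by (intro nn_integral_has_integral_lebesgue') auto
  finally have "emeasure M {\<omega>\<in>space M. Y \<omega> \<le> x} = ennreal (integral {0..x} g)"
    by (simp add: vimage_def Int_def conj_commute)
  moreover have "0 \<le> integral {0..x} g"
    using g int by (intro integral_nonneg) auto
  ultimately show ?thesis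
    by (simp add: measure_def)
qed

lemma ode_representable_cdf_if_ME_density:
  assumes Y: "distributed M lborel Y (\<lambda>x. ennreal (f x))" and "ME_density f"
  shows "ode_representable (\<lambda>x. prob {\<omega>\<in>space M. Y \<omega> \<le> x})"
    and "prob {\<omega>\<in>space M. Y \<omega> \<le> 0} = 0"
proof -
  have f: "ode_representable f" and f_neg: "\<forall>x<0. f x = 0" and f_nonneg: "\<forall>x. 0 \<le> f x"
    using \<open>ME_density f\<close> by (simp_all add: ME_density_iff_ME_function ode_representable_iff_ME_function)
  have cdf: "prob {\<omega>\<in>space M. Y \<omega> \<le> x} = integral {0..x} f" for x
    using f_neg f_nonneg ode_representable_continuous_on[OF f]
    by (intro prob_le_eq_integral_density[OF Y] integrable_continuous_interval)
      (auto intro: continuous_on_subset)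
  show "ode_representable (\<lambda>x. prob {\<omega>\<in>space M. Y \<omega> \<le> x})"
    unfolding cdf by (rule ode_representable_integral[OF f])
  show "prob {\<omega>\<in>space M. Y \<omega> \<le> 0} = 0"
    by (simp add: cdf)
qed

end

section \<open>Densities from ODE-representable distribution functions\<close>

lemma has_real_derivative_nonneg_if_mono_on:
  fixes f :: "real \<Rightarrow> real"
  assumes mono: "mono_on S f" and f: "(f has_real_derivative D) (at x within S)"
    and "x \<in> S" and "at x within S \<noteq> bot"
  shows "0 \<le> D"
proof (rule tendsto_lowerbound)
  show "((\<lambda>y. (f y - f x) / (y - x)) \<longlongrightarrow> D) (at x within S)"
    using f by (simp add: has_field_derivative_iff)
  show "\<forall>\<^sub>F y in at x within S. 0 \<le> (f y - f x) / (y - x)"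
    unfolding eventually_at_filter
  proof (intro always_eventually allI impI)
    fix y
    assume "y \<noteq> x" "y \<in> S"
    then consider "x < y" | "y < x"
      by linarith
    then show "0 \<le> (f y - f x) / (y - x)"
    proof cases
      case 1
      with mono_onD[OF mono \<open>x \<in> S\<close> \<open>y \<in> S\<close>] show ?thesis
        by (simp add: zero_le_divide_iff)
    next
      case 2
      with mono_onD[OF mono \<open>y \<in> S\<close> \<open>x \<in> S\<close>] show ?thesis
        by (simp add: zero_le_divide_iff)
    qed
  qed
qed fact

lemma has_integral_deriv_extended_by_zero:
  fixes F g :: "real \<Rightarrow> real"
  assumes F: "\<And>x. 0 \<le> x \<Longrightarrow> (F has_real_derivative g x) (at x within {0..})"
    and F_nonpos: "\<And>x. x \<le> 0 \<Longrightarrow> F x = 0" and "a \<le> b"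
  shows "((\<lambda>x. if 0 \<le> x then g x else 0) has_integral F b - F a) {a..b}"
proof (rule fundamental_theorem_of_calculus_interior_strong[where S="{0}"])
  fix x
  assume "x \<in> {a<..<b} - {0}"
  then consider "0 < x" | "x < 0"
    by force
  then have "(F has_real_derivative (if 0 \<le> x then g x else 0)) (at x)"
  proof cases
    case 1
    have "at x within {0..} = at x"
      by (rule at_within_nhd[of x "{0<..}"]) (use 1 in auto)
    then show ?thesis
      using F[of x] 1 by simp
  next
    case 2
    then have "(F has_real_derivative 0) (at x)"
      by (intro has_field_derivative_transform_within_open[OF DERIV_const, where S="{..<0}"])
        (auto simp: F_nonpos)
    with 2 show ?thesis
      by simp
  qed
  then show "(F has_vector_derivative (if 0 \<le> x then g x else 0)) (at x)"
    by (simp add: has_real_derivative_iff_has_vector_derivative)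
next
  have "continuous_on {0..} F"
    unfolding continuous_on_eq_continuous_within using DERIV_continuous[OF F] by auto
  moreover have "continuous_on {..0} F"
    using continuous_on_const[of "{..0}" 0] by (rule continuous_on_eq) (simp add: F_nonpos)
  ultimately have "continuous_on ({..0} \<union> {0..}) F"
    by (intro continuous_on_closed_Un) auto
  then show "continuous_on {a..b} F"
    by (rule continuous_on_subset) auto
qed (use \<open>a \<le> b\<close> in auto)

context prob_space
begin

lemma distributed_if_has_integral_cdf_diff:
  fixes Y :: "'a \<Rightarrow> real" and g :: "real \<Rightarrow> real"
  assumes Y: "Y \<in> borel_measurable M" and g: "g \<in> borel_measurable borel" "\<And>x. 0 \<le> g x"
    and int: "\<And>a b. a \<le> b \<Longrightarrow>
      (g has_integral prob {\<omega>\<in>space M. Y \<omega> \<le> b} - prob {\<omega>\<in>space M. Y \<omega> \<le> a}) {a..b}"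
  shows "distributed M lborel Y (\<lambda>x. ennreal (g x))"
proof -
  have ev: "{\<omega>\<in>space M. Y \<omega> \<le> x} \<in> events" for x
    using Y by (simp add: borel_measurable_iff_le)
  have "distr M lborel Y = density lborel (\<lambda>x. ennreal (g x))"
  proof (rule measure_eqI_generator_eq[where \<Omega>=UNIV and E="range (\<lambda>(a, b). {a<..b::real})"
        and A="\<lambda>i. {- real (i::nat)<..real i}"])
    fix I
    assume "I \<in> range (\<lambda>(a, b). {a<..b::real})"
    then obtain a b where I: "I = {a<..b}"
      by auto
    show "emeasure (distr M lborel Y) I = emeasure (density lborel (\<lambda>x. ennreal (g x))) I"
    proof (cases "a \<le> b")
      case True
      have "Y -` {a<..b} \<inter> space M = {\<omega>\<in>space M. Y \<omega> \<le> b} - {\<omega>\<in>space M. Y \<omega> \<le> a}"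
        by auto
      moreover have "prob ({\<omega>\<in>space M. Y \<omega> \<le> b} - {\<omega>\<in>space M. Y \<omega> \<le> a}) =
          prob {\<omega>\<in>space M. Y \<omega> \<le> b} - prob {\<omega>\<in>space M. Y \<omega> \<le> a}"
        using True by (intro finite_measure_Diff ev) auto
      ultimately have "emeasure (distr M lborel Y) I =
          ennreal (prob {\<omega>\<in>space M. Y \<omega> \<le> b} - prob {\<omega>\<in>space M. Y \<omega> \<le> a})"
        using Y by (simp add: I emeasure_distr emeasure_eq_measure)
      also have "\<dots> = (\<integral>\<^sup>+x. ennreal (g x) * indicator {a..b} x \<partial>lborel)"
        using g int[OF True] by (intro nn_integral_has_integral_lebesgue'[symmetric]) auto
      also have "\<dots> = (\<integral>\<^sup>+x. ennreal (g x) * indicator {a<..b} x \<partial>lborel)"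
        by (rule nn_integral_cong_AE)
          (use AE_lborel_singleton[of a] in \<open>eventually_elim, auto simp: indicator_def\<close>)
      also have "\<dots> = emeasure (density lborel (\<lambda>x. ennreal (g x))) I"
        using g by (simp add: I emeasure_density)
      finally show ?thesis .
    qed (simp add: I)
  next
    show "(\<Union>i. {- real (i::nat)<..real i}) = UNIV"
      by (rule UN_Ioc_eq_UNIV)
  next
    fix i :: nat
    show "emeasure (distr M lborel Y) {- real i<..real i} \<noteq> \<infinity>"
      using Y by (simp add: emeasure_distr emeasure_eq_measure)
  qed (auto simp: borel_sigma_sets_Ioc Int_stable_def)
  then show ?thesis
    using Y g unfolding distributed_def by simp
qed

lemma distributed_density_has_integral_1:
  assumes "distributed M lborel Y (\<lambda>x. ennreal (g x))" and g: "\<And>x. 0 \<le> g x"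
  shows "(g has_integral 1) UNIV"
proof -
  have "emeasure (density lborel (\<lambda>x. ennreal (g x))) UNIV = 1"
    using assms(1) emeasure_space_1 distributed_measurable[OF assms(1)]
    by (simp add: distributed_distr_eq_density[OF assms(1), symmetric] emeasure_distr)
  then have "(\<integral>\<^sup>+x. ennreal (g x) \<partial>lborel) = ennreal 1"
    using distributed_borel_measurable[OF assms(1)] by (simp add: emeasure_density)
  then show ?thesis
    using distributed_borel_measurable[OF assms(1)] g by (intro nn_integral_has_integral) auto
qed

lemma ME_density_if_cdf_ode_representable:
  fixes Y :: "'a \<Rightarrow> real"
  assumes Y: "Y \<in> borel_measurable M"
    and cdf: "ode_representable (\<lambda>x. prob {\<omega>\<in>space M. Y \<omega> \<le> x})"
    and cdf_0: "prob {\<omega>\<in>space M. Y \<omega> \<le> 0} = 0"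
  obtains g where "distributed M lborel Y (\<lambda>x. ennreal (g x))" and "ME_density g"
proof -
  define F where "F x = prob {\<omega>\<in>space M. Y \<omega> \<le> x}" for x
  have F_mono: "mono F"
    using Y unfolding F_def mono_def
    by (intro allI impI finite_measure_mono) (auto simp: borel_measurable_iff_le)
  have F_nonpos: "F x = 0" if "x \<le> 0" for x
    using monoD[OF F_mono that] cdf_0 measure_nonneg[of M] by (simp add: F_def order_antisym)
  obtain g\<^sub>0 where g\<^sub>0: "ode_representable g\<^sub>0"
    and F': "\<And>x. 0 \<le> x \<Longrightarrow> (F has_real_derivative g\<^sub>0 x) (at x within {0..})"
    using ode_representable_derivative[OF cdf] unfolding F_def by blast
  define g where "g x = (if 0 \<le> x then g\<^sub>0 x else 0)" for x
  have g_nonneg: "0 \<le> g x" for x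
  proof (cases "0 \<le> x")
    case True
    have "at_right x \<le> at x within {0..}"
      using True by (intro at_le) auto
    then have "at x within {0..} \<noteq> bot"
      using trivial_limit_at_right_real[of x] by (auto simp: bot_unique)
    then show ?thesis
      using has_real_derivative_nonneg_if_mono_on[OF mono_on_subset[OF F_mono] F'] True
      by (simp add: g_def)
  qed (simp add: g_def)
  have g_measurable: "g \<in> borel_measurable borel"
  proof -
    have "(\<lambda>x. indicator {0..} x *\<^sub>R g\<^sub>0 x) \<in> borel_measurable borel"
      by (rule borel_measurable_continuous_on_indicator[OF _ ode_representable_continuous_on[OF g\<^sub>0]])
        simp
    moreover have "(\<lambda>x. indicator {0..} x *\<^sub>R g\<^sub>0 x) = g"
      by (auto simp: g_def fun_eq_iff)
    ultimately show ?thesis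
      by simp
  qed
  have g_integral: "(g has_integral F b - F a) {a..b}" if "a \<le> b" for a b
    unfolding g_def by (rule has_integral_deriv_extended_by_zero[OF F' F_nonpos that])
  have distr: "distributed M lborel Y (\<lambda>x. ennreal (g x))"
    by (rule distributed_if_has_integral_cdf_diff[OF Y g_measurable g_nonneg g_integral[unfolded F_def]])
  have "ode_representable g"
    by (rule ode_representable_cong[OF g\<^sub>0]) (simp add: g_def)
  moreover have "(g has_integral 1) {0..}"
    using distributed_density_has_integral_1[OF distr g_nonneg] has_integral_restrict_UNIV[of "{0..}" g 1]
    by (simp add: g_def cong: if_cong)
  ultimately have "ME_density g"
    using g_nonneg by (simp add: ME_density_iff_ME_function ode_representable_iff_ME_function g_def)
  with distr show ?thesis
    using that by blast
qed

end

lemma MEam_if_ME_density: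
  assumes "ME_density g"
  shows "MEam g"
proof -
  have "\<forall>x. 0 \<le> g x"
    using assms unfolding ME_density_def by blast
  then show ?thesis
    unfolding MEam_def using assms
    by (intro conjI exI[of _ "1::nat"] exI[of _ "\<lambda>_. 1::real"] exI[of _ "\<lambda>_. g"]) auto
qed

theorem proposition3:
  fixes M :: "'a measure" and X :: "nat \<Rightarrow> 'a \<Rightarrow> real" and f :: "nat \<Rightarrow> real \<Rightarrow> real"
    and n k :: nat
  assumes "prob_space M"
    and "1 \<le> k" and "k \<le> n"
    and "\<And>j. j \<in> {1..n} \<Longrightarrow> ME_density (f j)"
    and "\<And>j. j \<in> {1..n} \<Longrightarrow> distributed M lborel (X j) (\<lambda>x. ennreal (f j x))"
    and "prob_space.indep_vars M (\<lambda>_. borel) X {1..n}"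
  shows "\<exists>g. distributed M lborel (order_stat X n k) (\<lambda>x. ennreal (g x)) \<and> MEam g"
proof -
  interpret prob_space M by fact
  have X: "X j \<in> borel_measurable M" if "j \<in> {1..n}" for j
    using distributed_measurable[OF assms(5)[OF that]] by simp
  have F: "ode_representable (\<lambda>x. prob {\<omega>\<in>space M. X j \<omega> \<le> x})"
    "prob {\<omega>\<in>space M. X j \<omega> \<le> 0} = 0" if "j \<in> {1..n}" for j
    using ode_representable_cdf_if_ME_density[OF assms(5,4)[OF that]] by simp_all
  obtain g where "distributed M lborel (order_stat X n k) (\<lambda>x. ennreal (g x))" "ME_density g"
    by (rule ME_density_if_cdf_ode_representable[OF borel_measurable_order_stat[OF assms(2,3) X]
          ode_representable_cdf_order_stat[OF assms(2,3,6) F]])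
  then show ?thesis
    using MEam_if_ME_density by blast
qed

end
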